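(* Let $\Omega_{1/2}=\{s\in\mathbb{C}:\operatorname{Re}(s)>\tfrac12\}\setminus[\tfrac12,1]$. The following are equivalent: (1) The Riemann hypothesis holds, i.e. $\zeta(s)\neq 0$ for all $s$ with $\operatorname{Re}(s)>\tfrac12$. (2) For every integer $i\ge 1$, the function $\zeta_i(s)$ has a meromorphic continuation to $\Omega_{1/2}$. (3) For every integer $i\ge 1$, the function $\zeta_i(s)$ has an analytic continuation to $\Omega_{1/2}$. (4) For all $i$ in some infinite subset of $\mathbb{N}^*$, the function $\zeta_i(s)$ has an analytic continuation to $\Omega_{1/2}$.
   Context: Let $p_1=2<p_2=3<p_3=5<\dots$ be the prime numbers in increasing order, $\mathbb{P}=\{p_n:n\ge1\}$. For an integer $k\ge1$ let $M_k=\{p_1,p_{k+1},p_{2k+1},p_{3k+1},\dots\}=\{p_{1+jk}:j\ge0\}$ and, for $\operatorname{Re}(s)>1$, $\zeta_k(s)=\prod_{p\in M_k}(1-p^{-s})^{-1}$ (so $\zeta_1=\zeta$). "Has an analytic (resp. meromorphic) continuation to $\Omega_{1/2}$" means there is an analytic (resp. meromorphic) function on $\Omega_{1/2}$ agreeing with $\zeta_i$ on $\{\operatorname{Re}(s)>1\}$. *)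

theory Defs
  imports "HOL-Complex_Analysis.Complex_Analysis" "HOL-Library.Infinite_Set"
begin

text \<open>p_{n+1} = nth_prime n, i.e. nth_prime 0 = 2, nth_prime 1 = 3, ... (0-indexed).\<close>
definition nth_prime :: "nat \<Rightarrow> nat" where
  "nth_prime n = enumerate {p. prime p} n"

text \<open>M_k = {p_{1+jk} : j \<ge> 0}; with 0-indexing p_{1+jk} = nth_prime (j*k).\<close>
definition M :: "nat \<Rightarrow> nat set" where
  "M k = {nth_prime (j * k) | j. True}"

text \<open>zeta_k(s) = prod_{j \<ge> 0} (1 - p_{1+jk}^{-s})^{-1}, meant for Re s > 1.\<close>
definition zeta_k :: "nat \<Rightarrow> complex \<Rightarrow> complex" where
  "zeta_k k s = (\<Prod>j. inverse (1 - of_nat (nth_prime (j * k)) powr (- s)))"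

definition Omega_half :: "complex set" where
  "Omega_half = {s. Re s > 1/2} - complex_of_real ` {1/2..1}"

text \<open>Riemann hypothesis: the Riemann zeta function (the analytic continuation of
  sum_{n\<ge>1} n^{-s} from Re s > 1 to Re s > 1/2, s \<noteq> 1) has no zeros in Re s > 1/2.
  Since {Re s > 1/2} - {1} is connected, the continuation is unique.\<close>
definition RH :: bool where
  "RH \<longleftrightarrow> (\<exists>f. f holomorphic_on ({s. Re s > 1/2} - {1}) \<and>
      (\<forall>s. Re s > 1 \<longrightarrow> f s = (\<Sum>n. 1 / of_nat (Suc n) powr s)) \<and>
      (\<forall>s. Re s > 1/2 \<and> s \<noteq> 1 \<longrightarrow> f s \<noteq> 0))"

definition has_meromorphic_cont :: "(complex \<Rightarrow> complex) \<Rightarrow> complex set \<Rightarrow> bool" where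
  "has_meromorphic_cont h A \<longleftrightarrow> (\<exists>g. g meromorphic_on A \<and> (\<forall>s. Re s > 1 \<longrightarrow> g s = h s))"

definition has_analytic_cont :: "(complex \<Rightarrow> complex) \<Rightarrow> complex set \<Rightarrow> bool" where
  "has_analytic_cont h A \<longleftrightarrow> (\<exists>g. g analytic_on A \<and> (\<forall>s. Re s > 1 \<longrightarrow> g s = h s))"

end

theory Submission
  imports Defs
begin

(* For Re s > 1 write log zeta_k s as the sum over j of -Ln (1 - p_(1+jk) powr -s). The map
   y \<mapsto> -Ln (1 - y powr -s) has derivative of size O(|s| y powr (-Re s - 1)), so replacing each
   term by the mean of the k terms belonging to p_(1+jk), ..., p_(k+jk) costs only
   O(p_(1+jk) powr -a - p_(1+(j+1)k) powr -a) with a = Re s; these errors telescope. Hence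
   log zeta_k = log zeta / k + B_k with B_k holomorphic for Re s > 1/2, i.e.
   zeta_k ^ k = zeta * exp (k B_k).
   Under RH, zeta has a holomorphic logarithm on the simply connected set Omega_half, and
   exp (log zeta / k + B_k) continues zeta_k. Conversely, if zeta_k continues meromorphically for
   infinitely many k, then at any zero of zeta in Omega_half its order is k times the order of the
   continuation of zeta_k for arbitrarily large k, which is impossible; on the segment (1/2, 1) the
   continuation 1/(s - 1) + sum (n powr -s - integral of x powr -s over [n, n + 1]) of zeta is
   negative. *)

lemma strict_mono_nth_prime: "strict_mono nth_prime"
  unfolding nth_prime_def[abs_def] using strict_mono_enumerate primes_infinite by blast

lemma range_nth_prime: "range nth_prime = {p. prime p}"
  unfolding nth_prime_def[abs_def] using range_enumerate primes_infinite by blast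

lemma prime_nth_prime: "prime (nth_prime n)"
  using range_nth_prime by blast

lemma nth_prime_ge: "n + 2 \<le> nth_prime n"
proof (induction n)
  case 0
  show ?case using prime_ge_2_nat[OF prime_nth_prime[of 0]] by simp
next
  case (Suc n)
  have "nth_prime n < nth_prime (Suc n)"
    using strict_mono_nth_prime by (simp add: strict_mono_less)
  with Suc show ?case by simp
qed

lemma tendsto_powr_nth_prime_mult:
  assumes "0 < a" "0 < k"
  shows "(\<lambda>j. real (nth_prime (j * k)) powr - a) \<longlonglongrightarrow> 0"
proof -
  have "j \<le> nth_prime (j * k)" for j
    using nth_prime_ge[of "j * k"] \<open>0 < k\<close> by (simp add: le_trans[of j "j * k"])
  then have "filterlim (\<lambda>j. real (nth_prime (j * k))) at_top sequentially"
    by (intro filterlim_at_top_mono[OF filterlim_real_sequentially]) auto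
  then show ?thesis
    using tendsto_neg_powr[of "- a"] assms by simp
qed

lemma norm_diff_le_of_dominated_derivative:
  fixes f :: "real \<Rightarrow> 'a::banach"
  assumes "a \<le> b"
    and "\<And>x. x \<in> {a..b} \<Longrightarrow> (f has_vector_derivative f' x) (at x within {a..b})"
    and "\<And>x. x \<in> {a..b} \<Longrightarrow> (g has_real_derivative g' x) (at x within {a..b})"
    and "\<And>x. x \<in> {a..b} \<Longrightarrow> norm (f' x) \<le> g' x"
  shows "norm (f b - f a) \<le> g b - g a"
proof -
  have f': "(f' has_integral (f b - f a)) {a..b}"
    by (rule fundamental_theorem_of_calculus) (use assms(1,2) in auto)
  have g': "(g' has_integral (g b - g a)) {a..b}"
    by (rule fundamental_theorem_of_calculus)
       (use assms(1,3) in \<open>auto simp: has_real_derivative_iff_has_vector_derivative\<close>)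
  have "norm (integral {a..b} f') \<le> integral {a..b} g'"
    by (rule integral_norm_bound_integral) (use f' g' assms(4) in auto)
  with f' g' show ?thesis by (simp add: integral_unique)
qed

lemma tendsto_infsum_atLeast_zero:
  fixes r :: "nat \<Rightarrow> real"
  assumes "summable r" "\<And>n. 0 \<le> r n"
  shows "(\<lambda>m. infsum r {m..}) \<longlonglongrightarrow> 0"
proof -
  have "(r has_sum suminf r) UNIV"
    using assms by (intro norm_summable_imp_has_sum) (simp_all add: summable_sums)
  then have "(r has_sum (suminf r - (\<Sum>n<m. r n))) (UNIV - {..<m})" for m
    by (intro has_sum_Diff) auto
  moreover have "UNIV - {..<m} = {m..}" for m :: nat by auto
  ultimately have "infsum r {m..} = suminf r - (\<Sum>n<m. r n)" for m
    by (metis infsumI)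
  moreover have "(\<lambda>m. suminf r - (\<Sum>n<m. r n)) \<longlonglongrightarrow> suminf r - suminf r"
    by (intro tendsto_diff tendsto_const summable_LIMSEQ assms(1))
  ultimately show ?thesis by simp
qed

lemma holomorphic_on_suminf_compact_majorant:
  fixes f :: "nat \<Rightarrow> complex \<Rightarrow> complex"
  assumes "open S" and "\<And>n. f n holomorphic_on S"
    and majorant: "\<And>K. compact K \<Longrightarrow> K \<subseteq> S \<Longrightarrow>
                     \<exists>M. summable M \<and> (\<forall>n. \<forall>s\<in>K. norm (f n s) \<le> M n)"
  shows "(\<lambda>s. \<Sum>n. f n s) holomorphic_on S"
proof (rule holomorphic_uniform_sequence[OF \<open>open S\<close>])
  show "(\<lambda>s. \<Sum>n<N. f n s) holomorphic_on S" for N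
    using assms(2) by (intro holomorphic_intros)
next
  fix x assume "x \<in> S"
  then obtain d where d: "d > 0" "cball x d \<subseteq> S"
    using \<open>open S\<close> open_contains_cball by blast
  then obtain M where "summable M" "\<And>n s. s \<in> cball x d \<Longrightarrow> norm (f n s) \<le> M n"
    using majorant[OF compact_cball d(2)] by blast
  then have "uniform_limit (cball x d) (\<lambda>N s. \<Sum>n<N. f n s) (\<lambda>s. \<Sum>n. f n s) sequentially"
    by (intro Weierstrass_m_test)
  with d show "\<exists>d>0. cball x d \<subseteq> S \<and>
                 uniform_limit (cball x d) (\<lambda>N s. \<Sum>n<N. f n s) (\<lambda>s. \<Sum>n. f n s) sequentially"
    by blast
qed

lemma compact_subset_halfplane_bounds:
  assumes "compact K" "K \<subseteq> {s. Re s > c}"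
  shows "\<exists>a>c. \<exists>R. \<forall>s\<in>K. a \<le> Re s \<and> norm s \<le> R"
proof (cases "K = {}")
  case True
  then show ?thesis by (intro exI[of _ "c + 1"]) auto
next
  case False
  obtain s0 where s0: "s0 \<in> K" "\<And>s. s \<in> K \<Longrightarrow> Re s0 \<le> Re s"
    using continuous_attains_inf[OF \<open>compact K\<close> False continuous_on_Re[OF continuous_on_id]] by blast
  obtain R where R: "\<And>s. s \<in> K \<Longrightarrow> norm s \<le> R"
    using compact_imp_bounded[OF \<open>compact K\<close>] bounded_iff by metis
  have "c < Re s0" using s0(1) assms(2) by auto
  with s0(2) R show ?thesis by blast
qed

lemma continuous_exp_eq_imp_diff_constant:
  fixes f g :: "'a::topological_space \<Rightarrow> complex"
  assumes "connected S" "continuous_on S f" "continuous_on S g"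
    and "\<And>z. z \<in> S \<Longrightarrow> exp (f z) = exp (g z)"
  obtains c where "\<And>z. z \<in> S \<Longrightarrow> f z = g z + c"
proof -
  have two_pi_int: "\<exists>n::int. f z - g z = of_int n * (2 * pi * \<i>)" if "z \<in> S" for z
  proof -
    from assms(4)[OF that] obtain n :: int where "f z = g z + of_real (of_int (2 * n) * pi) * \<i>"
      unfolding exp_eq by blast
    then show ?thesis by (intro exI[of _ n]) simp
  qed
  have "(\<lambda>z. f z - g z) constant_on S"
  proof (rule continuous_discrete_range_constant[OF \<open>connected S\<close>])
    show "continuous_on S (\<lambda>z. f z - g z)" using assms(2,3) by (intro continuous_intros)
  next
    fix x assume "x \<in> S"
    then obtain m :: int where m: "f x - g x = of_int m * (2 * pi * \<i>)" using two_pi_int by blast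
    show "\<exists>e>0. \<forall>y. y \<in> S \<and> f y - g y \<noteq> f x - g x \<longrightarrow> e \<le> norm (f y - g y - (f x - g x))"
    proof (intro exI[of _ "2 * pi"] conjI allI impI)
      fix y assume y: "y \<in> S \<and> f y - g y \<noteq> f x - g x"
      then obtain n :: int where n: "f y - g y = of_int n * (2 * pi * \<i>)" using two_pi_int by blast
      with m y have "1 \<le> \<bar>real_of_int (n - m)\<bar>" by auto
      then have "2 * pi * 1 \<le> 2 * pi * \<bar>real_of_int (n - m)\<bar>" by (intro mult_left_mono) auto
      also have "\<dots> = norm (of_int (n - m) * (2 * pi * \<i>) :: complex)"
        by (simp only: norm_mult norm_of_int norm_of_real norm_numeral norm_ii) simp
      finally show "2 * pi \<le> norm (f y - g y - (f x - g x))"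
        by (simp add: m n algebra_simps)
    qed simp
  qed
  then obtain c where c: "\<And>z. z \<in> S \<Longrightarrow> f z - g z = c" unfolding constant_on_def by blast
  show ?thesis by (rule that[of c]) (metis c add.commute diff_add_cancel)
qed

lemma meromorphic_eventually_zero_propagates:
  assumes "f meromorphic_on A" "open A" "connected A" "z0 \<in> A" "z \<in> A"
    and "frequently (\<lambda>w. f w = 0) (at z0)"
  shows "eventually (\<lambda>w. f w = 0) (at z)"
proof -
  have iso: "isolated_singularity_at f w" if "w \<in> A" for w
    by (rule meromorphic_on_isolated_singularity[OF meromorphic_on_subset[OF assms(1)]])
       (use that in auto)
  have "frequently (\<lambda>w. remove_sings f w = 0) (at z0)"
    using frequently_eventually_frequently[OF assms(6)
            eventually_remove_sings_eq_at[OF iso[OF assms(4)]]]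
    by (rule frequently_elim1) auto
  then have zero: "remove_sings f w = 0" if "w \<in> A" for w
    by (rule frequently_eq_meromorphic_imp_constant[OF _ remove_sings_nicely_meromorphic[OF assms(1)]])
       (use assms that in auto)
  have "eventually (\<lambda>w. w \<in> A) (at z)"
    using assms by (intro eventually_at_in_open') auto
  moreover have "eventually (\<lambda>w. remove_sings f w = f w) (at z)"
    by (rule eventually_remove_sings_eq_at[OF iso[OF assms(5)]])
  ultimately show ?thesis
    by eventually_elim (use zero in auto)
qed

lemma zorder_eq_mult_zorder_of_power_eq:
  assumes g: "g meromorphic_on {\<rho>}"
    and F: "F analytic_on {\<rho>}" "frequently (\<lambda>z. F z \<noteq> 0) (at \<rho>)"
    and E: "E analytic_on {\<rho>}" "E \<rho> \<noteq> 0"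
    and "0 < k" and eq: "eventually (\<lambda>z. g z ^ k = F z * E z) (at \<rho>)"
  shows "zorder F \<rho> = int k * zorder g \<rho>"
proof -
  have "eventually (\<lambda>z. E z \<noteq> 0) (at \<rho>)"
    using analytic_at_imp_isCont[OF E(1)] E(2)
    by (intro tendsto_imp_eventually_ne) (auto simp: isCont_def)
  then have E_freq: "frequently (\<lambda>z. E z \<noteq> 0) (at \<rho>)"
    by (intro eventually_frequently) auto
  have "frequently (\<lambda>z. g z \<noteq> 0) (at \<rho>)"
  proof (rule ccontr)
    assume "\<not> frequently (\<lambda>z. g z \<noteq> 0) (at \<rho>)"
    then have "eventually (\<lambda>z. g z = 0) (at \<rho>)" by (simp add: not_frequently)
    with eq \<open>eventually (\<lambda>z. E z \<noteq> 0) (at \<rho>)\<close> have "eventually (\<lambda>z. F z = 0) (at \<rho>)"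
      by eventually_elim (use \<open>0 < k\<close> in \<open>auto simp: zero_power\<close>)
    with F(2) show False by (simp add: not_eventually[symmetric] frequently_def)
  qed
  then have "int k * zorder g \<rho> = zorder (\<lambda>z. g z ^ k) \<rho>"
    by (rule zorder_power[OF g, symmetric])
  also have "\<dots> = zorder (\<lambda>z. F z * E z) \<rho>"
    by (rule zorder_cong[OF eq refl])
  also have "\<dots> = zorder F \<rho> + zorder E \<rho>"
    by (rule zorder_mult[OF analytic_on_imp_meromorphic_on[OF F(1)] F(2)
                            analytic_on_imp_meromorphic_on[OF E(1)] E_freq])
  also have "zorder E \<rho> = 0"
    by (rule zorder_eq_0I[OF E])
  finally show ?thesis by simp
qed

lemma summable_Suc_powr: "1 < a \<Longrightarrow> summable (\<lambda>n. real (Suc n) powr - a)"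
  using summable_Suc_iff[of "\<lambda>n. real n powr - a"] summable_real_powr_iff[of "- a"] by simp

lemma powr_increment_ge:
  fixes x b :: real
  assumes "0 < x" "0 < b" "b < 1"
  shows "(1 - b) * (x + 1) powr - b \<le> (x + 1) powr (1 - b) - x powr (1 - b)"
proof -
  have "((\<lambda>x. x powr (1 - b)) has_real_derivative (1 - b) * t powr - b) (at t)" if "x \<le> t" for t
    using has_real_derivative_powr[of t "1 - b"] assms that by simp
  then obtain z where z: "x < z" "z < x + 1"
    and mvt: "(x + 1) powr (1 - b) - x powr (1 - b) = (x + 1 - x) * ((1 - b) * z powr - b)"
    using MVT2[of x "x + 1" "\<lambda>x. x powr (1 - b)" "\<lambda>x. (1 - b) * x powr - b"] by auto
  have "(x + 1) powr - b \<le> z powr - b"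
    using z assms by (intro powr_mono2') auto
  then show ?thesis
    using mvt assms by (simp add: mult_left_mono)
qed

lemma norm_of_real_powr: "0 < y \<Longrightarrow> norm (of_real y powr s :: complex) = y powr Re s"
  by (simp add: norm_powr_real_powr)

lemma norm_of_nat_powr: "norm (of_nat n powr s :: complex) = real n powr Re s"
  by (simp add: norm_powr_real_powr)

lemma of_nat_powr_of_real: "(of_nat m :: complex) powr of_real c = of_real (real m powr c)"
  using powr_of_real[of "real m" c] by simp

lemma has_vector_derivative_of_real_powr:
  assumes "0 < x"
  shows "((\<lambda>x. of_real x powr s :: complex) has_vector_derivative s * of_real x powr (s - 1))
           (at x within A)"
proof -
  have "of_real x \<notin> \<real>\<^sub>\<le>\<^sub>0" using assms by (auto elim!: nonpos_Reals_cases)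
  then show ?thesis
    by (rule has_vector_derivative_real_field[OF has_field_derivative_powr])
qed

lemma norm_of_real_powr_diff_le:
  assumes "1 \<le> y" "y \<le> x" "a \<le> Re s" "0 \<le> a"
  shows "norm (of_real x powr - s - of_real y powr - s :: complex)
           \<le> norm s * y powr (- a - 1) * (x - y)"
proof -
  have "norm (of_real x powr - s - of_real y powr - s :: complex)
          \<le> norm s * y powr (- a - 1) * x - norm s * y powr (- a - 1) * y"
  proof (rule norm_diff_le_of_dominated_derivative[OF assms(2)])
    fix t assume t: "t \<in> {y..x}"
    then have "1 \<le> t" using assms by auto
    show "((\<lambda>x. of_real x powr - s :: complex) has_vector_derivative - s * of_real t powr (- s - 1))
            (at t within {y..x})"
      using \<open>1 \<le> t\<close> by (intro has_vector_derivative_of_real_powr) auto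
    show "((\<lambda>x. norm s * y powr (- a - 1) * x) has_real_derivative norm s * y powr (- a - 1))
            (at t within {y..x})"
      by (auto intro!: derivative_eq_intros)
    have "t powr (- Re s - 1) \<le> y powr (- Re s - 1)"
      using assms t by (intro powr_mono2') auto
    also have "\<dots> \<le> y powr (- a - 1)"
      using assms by (intro powr_mono) auto
    finally show "norm (- s * of_real t powr (- s - 1)) \<le> norm s * y powr (- a - 1)"
      using \<open>1 \<le> t\<close> by (simp add: norm_mult norm_of_real_powr mult_left_mono)
  qed
  then show ?thesis by (simp add: algebra_simps)
qed

section \<open>Logarithms of Euler factors\<close>

lemma one_minus_notin_nonpos_Reals: "norm (w :: complex) < 1 \<Longrightarrow> 1 - w \<notin> \<real>\<^sub>\<le>\<^sub>0"
  using abs_Re_le_cmod[of w] by (auto elim!: nonpos_Reals_cases simp: complex_eq_iff)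

lemma norm_of_real_powr_neg_less_1:
  assumes "1 < y" "0 < Re s"
  shows "norm (of_real y powr - s :: complex) < 1"
  using assms by (simp add: norm_of_real_powr powr_less_one)

definition log_euler_factor :: "complex \<Rightarrow> real \<Rightarrow> complex" where
  "log_euler_factor s y = - Ln (1 - of_real y powr - s)"

lemma exp_log_euler_factor:
  assumes "1 < y" "0 < Re s"
  shows "exp (log_euler_factor s y) = inverse (1 - of_real y powr - s)"
proof -
  have "1 - of_real y powr - s \<noteq> (0 :: complex)"
    using norm_of_real_powr_neg_less_1[OF assms] by auto
  then show ?thesis by (simp add: log_euler_factor_def exp_minus)
qed

lemma holomorphic_log_euler_factor:
  assumes "1 < y"
  shows "(\<lambda>s. log_euler_factor s y) holomorphic_on {s. 0 < Re s}"
  unfolding log_euler_factor_def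
proof (intro holomorphic_intros)
  fix s assume "s \<in> {s. 0 < Re s}"
  then show "1 - of_real y powr - s \<notin> \<real>\<^sub>\<le>\<^sub>0"
    using assms by (intro one_minus_notin_nonpos_Reals norm_of_real_powr_neg_less_1) auto
qed

lemma norm_log_euler_factor_le:
  assumes "2 \<le> y" "1 < a" "a \<le> Re s"
  shows "norm (log_euler_factor s y) \<le> 2 * y powr - a"
proof -
  have "norm (of_real y powr - s :: complex) \<le> y powr - a"
    using assms by (simp add: norm_of_real_powr powr_mono)
  also have "\<dots> < y powr - 1"
    using assms by (intro powr_less_mono) auto
  also have "\<dots> \<le> 1 / 2"
    using assms by (simp add: powr_minus_divide)
  finally have small: "norm (- (of_real y powr - s) :: complex) < 1 / 2" by simp
  have "norm (log_euler_factor s y) = norm (Ln (1 + - (of_real y powr - s)))"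
    by (simp add: log_euler_factor_def)
  also have "\<dots> \<le> 2 * norm (- (of_real y powr - s) :: complex)"
    by (rule norm_Ln_le[OF small])
  also have "\<dots> \<le> 2 * y powr - a"
    using assms by (simp add: norm_of_real_powr powr_mono)
  finally show ?thesis .
qed

lemma log_euler_factor_has_vector_derivative:
  assumes "1 < y" "0 < Re s"
  shows "((\<lambda>y. log_euler_factor s y) has_vector_derivative
           - s * of_real y powr (- s - 1) / (1 - of_real y powr - s)) (at y within A)"
proof -
  have y: "of_real y \<notin> \<real>\<^sub>\<le>\<^sub>0" using assms by (auto elim!: nonpos_Reals_cases)
  have "1 - of_real y powr - s \<notin> \<real>\<^sub>\<le>\<^sub>0"
    using assms by (intro one_minus_notin_nonpos_Reals norm_of_real_powr_neg_less_1)
  then have "((\<lambda>z. - Ln (1 - z powr - s)) has_field_derivative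
               - s * of_real y powr (- s - 1) / (1 - of_real y powr - s)) (at (of_real y))"
    using assms by (auto intro!: derivative_eq_intros has_field_derivative_powr[OF y] simp: field_simps)
  then show ?thesis
    unfolding log_euler_factor_def by (rule has_vector_derivative_real_field)
qed

lemma norm_of_real_powr_le_three_quarters:
  assumes "2 \<le> y" "1 / 2 \<le> Re s"
  shows "norm (of_real y powr - s :: complex) \<le> 3 / 4"
proof -
  have "norm (of_real y powr - s :: complex) = y powr - Re s"
    using assms by (simp add: norm_of_real_powr)
  also have "\<dots> \<le> y powr - (1 / 2)"
    using assms by (intro powr_mono) auto
  also have "\<dots> \<le> 2 powr - (1 / 2)"
    using assms by (intro powr_mono2') auto
  also have "\<dots> \<le> 3 / 4"
  proof (rule power2_le_imp_le)
    have "(2 powr - (1 / 2) :: real)\<^sup>2 = 2 powr (- (1 / 2) + - (1 / 2))"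
      by (simp only: power2_eq_square powr_add)
    also have "\<dots> = 1 / 2" by (simp add: powr_minus_divide)
    finally have sq: "(2 powr - (1 / 2) :: real)\<^sup>2 = 1 / 2" .
    show "(2 powr - (1 / 2) :: real)\<^sup>2 \<le> (3 / 4)\<^sup>2"
      unfolding sq by (simp add: power2_eq_square)
  qed auto
  finally show ?thesis .
qed

lemma norm_log_euler_factor_derivative_le:
  assumes "2 \<le> y" "1 / 2 \<le> a" "a \<le> Re s" "norm s \<le> R"
  shows "norm (- s * of_real y powr (- s - 1) / (1 - of_real y powr - s)) \<le> 4 * R * y powr (- a - 1)"
proof -
  have R: "0 \<le> R" using order.trans[OF norm_ge_zero assms(4)] .
  have "norm (of_real y powr - s :: complex) \<le> 3 / 4"
    using assms by (intro norm_of_real_powr_le_three_quarters) auto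
  then have "1 / 4 \<le> norm (1 - of_real y powr - s :: complex)"
    using norm_triangle_ineq2[of 1 "of_real y powr - s :: complex"] by simp
  moreover have "norm (s * of_real y powr (- s - 1)) \<le> R * y powr (- a - 1)"
    using assms R by (auto simp: norm_mult norm_of_real_powr intro!: mult_mono powr_mono)
  ultimately have "norm (s * of_real y powr (- s - 1)) / norm (1 - of_real y powr - s)
                     \<le> R * y powr (- a - 1) / (1 / 4)"
    using R by (intro frac_le) auto
  then show ?thesis by (simp add: norm_divide)
qed

lemma norm_log_euler_factor_diff_le:
  assumes "2 \<le> y1" "y1 \<le> y2" "1 / 2 \<le> a" "a \<le> Re s" "norm s \<le> R"
  shows "norm (log_euler_factor s y2 - log_euler_factor s y1)
           \<le> 4 * R / a * (y1 powr - a - y2 powr - a)"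
proof -
  have "norm (log_euler_factor s y2 - log_euler_factor s y1) \<le>
          - 4 * R / a * y2 powr - a - (- 4 * R / a * y1 powr - a)"
  proof (rule norm_diff_le_of_dominated_derivative[OF assms(2)])
    fix y assume "y \<in> {y1..y2}"
    then have "2 \<le> y" using assms by auto
    then show "((\<lambda>y. log_euler_factor s y) has_vector_derivative
                - s * of_real y powr (- s - 1) / (1 - of_real y powr - s)) (at y within {y1..y2})"
      using assms by (intro log_euler_factor_has_vector_derivative) auto
    show "((\<lambda>y. - 4 * R / a * y powr - a) has_real_derivative 4 * R * y powr (- a - 1))
            (at y within {y1..y2})"
      using \<open>2 \<le> y\<close> assms by (auto intro!: derivative_eq_intros simp: field_simps)
    show "norm (- s * of_real y powr (- s - 1) / (1 - of_real y powr - s)) \<le> 4 * R * y powr (- a - 1)"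
      using \<open>2 \<le> y\<close> assms by (intro norm_log_euler_factor_derivative_le) auto
  qed
  then show ?thesis by (simp add: algebra_simps)
qed

definition log_zeta_k :: "nat \<Rightarrow> complex \<Rightarrow> complex" where
  "log_zeta_k k s = (\<Sum>j. log_euler_factor s (nth_prime (j * k)))"

lemma norm_log_euler_factor_nth_prime_le:
  assumes "0 < k" "1 < a" "a \<le> Re s"
  shows "norm (log_euler_factor s (nth_prime (j * k))) \<le> 2 * real (Suc j) powr - a"
proof -
  have "j \<le> j * k" using \<open>0 < k\<close> by simp
  then have "Suc j \<le> nth_prime (j * k)"
    using nth_prime_ge[of "j * k"] by linarith
  then have "real (nth_prime (j * k)) powr - a \<le> real (Suc j) powr - a"
    using assms by (intro powr_mono2') auto
  moreover have "2 \<le> real (nth_prime (j * k))"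
    using nth_prime_ge[of "j * k"] by simp
  ultimately show ?thesis
    using norm_log_euler_factor_le[of "nth_prime (j * k)" a s] assms by simp
qed

lemma log_zeta_k_sums:
  assumes "0 < k" "1 < Re s"
  shows "(\<lambda>j. log_euler_factor s (nth_prime (j * k))) sums log_zeta_k k s"
proof -
  have "summable (\<lambda>j. log_euler_factor s (nth_prime (j * k)))"
    by (rule summable_comparison_test'[OF summable_mult[OF summable_Suc_powr[OF assms(2)]]])
       (rule norm_log_euler_factor_nth_prime_le[OF assms(1,2) order.refl])
  then show ?thesis
    unfolding log_zeta_k_def by (rule summable_sums)
qed

lemma holomorphic_log_zeta_k:
  assumes "0 < k"
  shows "log_zeta_k k holomorphic_on {s. 1 < Re s}"
  unfolding log_zeta_k_def[abs_def]
proof (rule holomorphic_on_suminf_compact_majorant[OF open_halfspace_Re_gt])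
  show "(\<lambda>s. log_euler_factor s (nth_prime (j * k))) holomorphic_on {s. 1 < Re s}" for j
    using nth_prime_ge[of "j * k"]
    by (intro holomorphic_on_subset[OF holomorphic_log_euler_factor]) auto
next
  fix K assume K: "compact K" "K \<subseteq> {s. 1 < Re s}"
  obtain a R where a: "1 < a" and bound: "\<And>s. s \<in> K \<Longrightarrow> a \<le> Re s \<and> norm s \<le> R"
    using compact_subset_halfplane_bounds[OF K] by blast
  have "norm (log_euler_factor s (nth_prime (j * k))) \<le> 2 * real (Suc j) powr - a" if "s \<in> K" for j s
    using norm_log_euler_factor_nth_prime_le[OF assms a] bound[OF that] by blast
  moreover have "summable (\<lambda>j. 2 * real (Suc j) powr - a)"
    using summable_Suc_powr[OF a] by (rule summable_mult)
  ultimately show "\<exists>M. summable M \<and> (\<forall>j. \<forall>s\<in>K. norm (log_euler_factor s (nth_prime (j * k))) \<le> M j)"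
    by blast
qed

lemma zeta_k_eq_exp_log_zeta_k:
  assumes "0 < k" "1 < Re s"
  shows "zeta_k k s = exp (log_zeta_k k s)"
proof -
  have "(\<lambda>j. exp (log_euler_factor s (nth_prime (j * k)))) has_prod exp (log_zeta_k k s)"
    using sums_imp_has_prod_exp[OF log_zeta_k_sums[OF assms]] by (simp add: has_prod_def)
  moreover have "exp (log_euler_factor s (nth_prime (j * k))) =
                   inverse (1 - of_nat (nth_prime (j * k)) powr - s)" for j
    using exp_log_euler_factor[of "nth_prime (j * k)" s] nth_prime_ge[of "j * k"] assms by simp
  ultimately have "(\<lambda>j. inverse (1 - of_nat (nth_prime (j * k)) powr - s))
                     has_prod exp (log_zeta_k k s)"
    by simp
  then show ?thesis
    unfolding zeta_k_def by (rule has_prod_unique[symmetric])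
qed

section \<open>The Euler product\<close>

lemma summable_on_norm_of_nat_powr:
  assumes "1 < Re s"
  shows "(\<lambda>n. norm (of_nat n powr - s :: complex)) summable_on A"
proof -
  have "summable (\<lambda>n. real n powr - Re s)"
    using assms by (simp add: summable_real_powr_iff)
  then have "(\<lambda>n. norm (of_nat n powr - s :: complex)) summable_on UNIV"
    by (intro norm_summable_imp_summable_on) (simp add: norm_of_nat_powr)
  then show ?thesis by (rule summable_on_subset_banach) simp
qed

definition free_of_first_primes :: "nat \<Rightarrow> nat set" where
  "free_of_first_primes m = {n. 0 < n \<and> (\<forall>j<m. \<not> nth_prime j dvd n)}"

lemma mult_nth_prime_free_of_first_primes:
  "(*) (nth_prime m) ` free_of_first_primes m \<subseteq> free_of_first_primes m"
proof clarify
  fix n assume n: "n \<in> free_of_first_primes m"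
  have "\<not> nth_prime j dvd nth_prime m * n" if "j < m" for j
  proof
    assume "nth_prime j dvd nth_prime m * n"
    moreover have "\<not> nth_prime j dvd n" using n that by (simp add: free_of_first_primes_def)
    ultimately have "nth_prime j dvd nth_prime m"
      using prime_dvd_mult_iff[OF prime_nth_prime] by blast
    then have "nth_prime j = nth_prime m"
      using prime_nth_prime primes_dvd_imp_eq by blast
    with \<open>j < m\<close> show False
      using strict_mono_nth_prime by (simp add: strict_mono_eq)
  qed
  with n show "nth_prime m * n \<in> free_of_first_primes m"
    using prime_gt_0_nat[OF prime_nth_prime] by (simp add: free_of_first_primes_def)
qed

lemma free_of_first_primes_Suc:
  "free_of_first_primes (Suc m) =
     free_of_first_primes m - (*) (nth_prime m) ` free_of_first_primes m"
proof (intro equalityI subsetI)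
  fix n assume "n \<in> free_of_first_primes (Suc m)"
  then show "n \<in> free_of_first_primes m - (*) (nth_prime m) ` free_of_first_primes m"
    by (auto simp: free_of_first_primes_def)
next
  fix n assume n: "n \<in> free_of_first_primes m - (*) (nth_prime m) ` free_of_first_primes m"
  have "\<not> nth_prime m dvd n"
  proof
    assume "nth_prime m dvd n"
    then obtain n' where n': "n = nth_prime m * n'" by blast
    with n have "n' \<in> free_of_first_primes m"
      by (auto simp: free_of_first_primes_def intro: dvd_mult2)
    with n n' show False by blast
  qed
  with n show "n \<in> free_of_first_primes (Suc m)"
    by (auto simp: free_of_first_primes_def less_Suc_eq)
qed

lemma free_of_first_primes_ge:
  assumes "n \<in> free_of_first_primes m" "n \<noteq> 1"
  shows "m \<le> n"
proof -
  obtain p where p: "prime p" "p dvd n"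
    using prime_factor_nat[OF assms(2)] by blast
  then obtain j where j: "p = nth_prime j"
    using range_nth_prime by (metis imageE mem_Collect_eq)
  with assms(1) p(2) have "m \<le> j"
    by (auto simp: free_of_first_primes_def not_less[symmetric])
  then have "m \<le> nth_prime m" "nth_prime m \<le> p"
    using nth_prime_ge[of m] strict_mono_nth_prime j by (auto simp: strict_mono_less_eq)
  moreover have "p \<le> n"
    using p(2) assms(1) by (intro dvd_imp_le) (auto simp: free_of_first_primes_def)
  ultimately show ?thesis by linarith
qed

lemma has_sum_free_of_first_primes:
  assumes "((\<lambda>n. of_nat n powr - s :: complex) has_sum Z) (free_of_first_primes 0)"
  shows "((\<lambda>n. of_nat n powr - s :: complex) has_sum
            (\<Prod>j<m. 1 - of_nat (nth_prime j) powr - s) * Z) (free_of_first_primes m)"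
proof (induction m)
  case 0
  then show ?case using assms by simp
next
  case (Suc m)
  let ?f = "\<lambda>n. of_nat n powr - s :: complex" and ?p = "nth_prime m"
    and ?X = "(\<Prod>j<m. 1 - of_nat (nth_prime j) powr - s) * Z"
  have "((\<lambda>n. ?f ?p * ?f n) has_sum ?f ?p * ?X) (free_of_first_primes m)"
    by (rule has_sum_cmult_right[OF Suc.IH])
  then have "((?f \<circ> (*) ?p) has_sum ?f ?p * ?X) (free_of_first_primes m)"
    by (simp add: o_def powr_times_real)
  moreover have "inj_on ((*) ?p) (free_of_first_primes m)"
    using prime_gt_0_nat[OF prime_nth_prime[of m]] by (intro inj_onI) simp
  ultimately have "(?f has_sum ?f ?p * ?X) ((*) ?p ` free_of_first_primes m)"
    by (simp add: has_sum_reindex)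
  from has_sum_Diff[OF Suc.IH this mult_nth_prime_free_of_first_primes]
  show ?case by (simp add: free_of_first_primes_Suc algebra_simps)
qed

definition zeta_series :: "complex \<Rightarrow> complex" where
  "zeta_series s = (\<Sum>n. 1 / of_nat (Suc n) powr s)"

lemma summable_norm_of_nat_Suc_powr:
  assumes "1 < Re s"
  shows "summable (\<lambda>n. norm (of_nat (Suc n) powr - s :: complex))"
proof -
  have norm_eq: "norm (of_nat (Suc n) powr - s :: complex) = real (Suc n) powr - Re s" for n
    by (simp only: norm_of_nat_powr uminus_complex.sel)
  show ?thesis
    unfolding norm_eq by (rule summable_Suc_powr[OF assms])
qed

lemma zeta_series_sums:
  assumes "1 < Re s"
  shows "(\<lambda>n. of_nat (Suc n) powr - s :: complex) sums zeta_series s"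
proof -
  have "(\<lambda>n. of_nat (Suc n) powr - s :: complex) = (\<lambda>n. 1 / of_nat (Suc n) powr s)"
    by (simp only: powr_minus_divide)
  then show ?thesis
    unfolding zeta_series_def
    using summable_sums[OF summable_norm_cancel[OF summable_norm_of_nat_Suc_powr[OF assms]]] by simp
qed

lemma has_sum_zeta_series:
  assumes "1 < Re s"
  shows "((\<lambda>n. of_nat n powr - s :: complex) has_sum zeta_series s) (free_of_first_primes 0)"
proof -
  have "((\<lambda>n. of_nat (Suc n) powr - s :: complex) has_sum zeta_series s) UNIV"
    by (rule norm_summable_imp_has_sum[OF summable_norm_of_nat_Suc_powr zeta_series_sums])
       (use assms in auto)
  then have "((\<lambda>n. of_nat n powr - s :: complex) has_sum zeta_series s) (range Suc)"
    by (subst has_sum_reindex) (simp_all add: o_def)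
  moreover have "range Suc = free_of_first_primes 0"
    by (auto simp: free_of_first_primes_def image_iff gr0_conv_Suc)
  ultimately show ?thesis by simp
qed

lemma euler_product_tendsto:
  assumes "1 < Re s"
  shows "(\<lambda>m. (\<Prod>j<m. 1 - of_nat (nth_prime j) powr - s) * zeta_series s) \<longlonglongrightarrow> 1"
proof -
  let ?f = "\<lambda>n. of_nat n powr - s :: complex" and ?r = "\<lambda>n. norm (of_nat n powr - s :: complex)"
  have r_summable_on: "?r summable_on A" for A
    by (rule summable_on_norm_of_nat_powr[OF assms])
  have tail_bound: "norm ((\<Prod>j<m. 1 - of_nat (nth_prime j) powr - s) * zeta_series s - 1)
                      \<le> infsum ?r {m..}" for m
  proof -
    have "\<not> nth_prime j dvd 1" for j
      using nth_prime_ge[of j] by simp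
    then have "1 \<in> free_of_first_primes m"
      by (simp add: free_of_first_primes_def)
    moreover have "(?f has_sum 1) {1}"
      by (rule has_sum_finiteI) simp_all
    ultimately have "(?f has_sum (\<Prod>j<m. 1 - of_nat (nth_prime j) powr - s) * zeta_series s - 1)
                       (free_of_first_primes m - {1})"
      by (intro has_sum_Diff has_sum_free_of_first_primes has_sum_zeta_series assms) auto
    then have "norm ((\<Prod>j<m. 1 - of_nat (nth_prime j) powr - s) * zeta_series s - 1)
                 \<le> infsum ?r (free_of_first_primes m - {1})"
      by (rule norm_infsum_le) (auto intro: has_sum_infsum r_summable_on)
    also have "\<dots> \<le> infsum ?r {m..}"
      by (rule infsum_mono_neutral[OF r_summable_on r_summable_on])
         (auto dest: free_of_first_primes_ge)
    finally show ?thesis .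
  qed
  have "summable ?r"
    using assms by (simp add: norm_of_nat_powr summable_real_powr_iff)
  from tendsto_infsum_atLeast_zero[OF this norm_ge_zero]
  have "(\<lambda>m. (\<Prod>j<m. 1 - of_nat (nth_prime j) powr - s) * zeta_series s - 1) \<longlonglongrightarrow> 0"
    by (rule Lim_null_comparison[rotated]) (intro always_eventually allI tail_bound)
  then show ?thesis by (rule LIM_zero_cancel)
qed

lemma zeta_series_eq_exp_log_zeta:
  assumes "1 < Re s"
  shows "zeta_series s = exp (log_zeta_k 1 s)"
proof -
  have "1 - of_nat (nth_prime j) powr - s = exp (- log_euler_factor s (nth_prime j))" for j
    using exp_log_euler_factor[of "nth_prime j" s] nth_prime_ge[of j] assms by (simp add: exp_minus)
  then have prod_eq: "(\<Prod>j<m. 1 - of_nat (nth_prime j) powr - s) =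
                        exp (- (\<Sum>j<m. log_euler_factor s (nth_prime j)))" for m
    by (simp add: exp_sum[symmetric] sum_negf[symmetric])
  have "(\<lambda>m. \<Sum>j<m. log_euler_factor s (nth_prime j)) \<longlonglongrightarrow> log_zeta_k 1 s"
    using log_zeta_k_sums[of 1 s] assms by (simp add: sums_def)
  then have "(\<lambda>m. (\<Prod>j<m. 1 - of_nat (nth_prime j) powr - s) * zeta_series s)
               \<longlonglongrightarrow> exp (- log_zeta_k 1 s) * zeta_series s"
    unfolding prod_eq by (intro tendsto_intros)
  with euler_product_tendsto[OF assms] have "exp (- log_zeta_k 1 s) * zeta_series s = 1"
    using LIMSEQ_unique by blast
  then show ?thesis
    by (simp add: exp_minus field_simps)
qed

section \<open>Comparing log zeta_k with log zeta / k\<close>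

(* The function B_k: the j-th term compares the factor at p_(1+jk) with the mean over the block
   p_(1+jk), ..., p_(k+jk). *)
definition log_zeta_k_correction_term :: "nat \<Rightarrow> complex \<Rightarrow> nat \<Rightarrow> complex" where
  "log_zeta_k_correction_term k s j = log_euler_factor s (nth_prime (j * k)) -
     (\<Sum>r<k. log_euler_factor s (nth_prime (j * k + r))) / of_nat k"

definition log_zeta_k_correction :: "nat \<Rightarrow> complex \<Rightarrow> complex" where
  "log_zeta_k_correction k s = (\<Sum>j. log_zeta_k_correction_term k s j)"

lemma norm_log_zeta_k_correction_term_le:
  assumes "0 < k" "1 / 2 \<le> a" "a \<le> Re s" "norm s \<le> R"
  shows "norm (log_zeta_k_correction_term k s j)
           \<le> 4 * R / a * (real (nth_prime (j * k)) powr - a - real (nth_prime (j * k + k)) powr - a)"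
    (is "_ \<le> ?C * ?D")
proof -
  let ?L = "\<lambda>n. log_euler_factor s (nth_prime n)"
  have C: "0 \<le> ?C" using assms order.trans[OF norm_ge_zero assms(4)] by simp
  have mono: "nth_prime m \<le> nth_prime n" if "m \<le> n" for m n
    using strict_mono_nth_prime that by (simp add: strict_mono_less_eq)
  have "norm (?L (j * k) - ?L (j * k + r)) \<le> ?C * ?D" if "r < k" for r
  proof -
    have "norm (?L (j * k) - ?L (j * k + r)) = norm (?L (j * k + r) - ?L (j * k))"
      by (rule norm_minus_commute)
    also have "\<dots> \<le> ?C * (real (nth_prime (j * k)) powr - a - real (nth_prime (j * k + r)) powr - a)"
      using assms nth_prime_ge[of "j * k"] mono[of "j * k" "j * k + r"]
      by (intro norm_log_euler_factor_diff_le) auto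
    also have "\<dots> \<le> ?C * ?D"
      using assms mono[of "j * k + r" "j * k + k"] nth_prime_ge[of "j * k + r"] \<open>r < k\<close>
      by (intro mult_left_mono C diff_left_mono powr_mono2') auto
    finally show ?thesis .
  qed
  then have sum_le: "norm (\<Sum>r<k. ?L (j * k) - ?L (j * k + r)) \<le> real k * (?C * ?D)"
    using sum_norm_le[of "{..<k}" "\<lambda>r. ?L (j * k) - ?L (j * k + r)" "\<lambda>_. ?C * ?D"] by simp
  have "log_zeta_k_correction_term k s j = (\<Sum>r<k. ?L (j * k) - ?L (j * k + r)) / of_nat k"
    using \<open>0 < k\<close> by (simp add: log_zeta_k_correction_term_def sum_subtractf field_simps)
  then have "norm (log_zeta_k_correction_term k s j)
               = norm (\<Sum>r<k. ?L (j * k) - ?L (j * k + r)) / real k"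
    by (simp add: norm_divide)
  also have "\<dots> \<le> real k * (?C * ?D) / real k"
    using sum_le by (rule divide_right_mono) simp
  also have "\<dots> = ?C * ?D"
    using \<open>0 < k\<close> by simp
  finally show ?thesis .
qed

lemma holomorphic_log_zeta_k_correction:
  assumes "0 < k"
  shows "log_zeta_k_correction k holomorphic_on {s. 1 / 2 < Re s}"
  unfolding log_zeta_k_correction_def[abs_def]
proof (rule holomorphic_on_suminf_compact_majorant[OF open_halfspace_Re_gt])
  have "(\<lambda>s. log_euler_factor s (nth_prime n)) holomorphic_on {s. 1 / 2 < Re s}" for n
    using nth_prime_ge[of n] by (intro holomorphic_on_subset[OF holomorphic_log_euler_factor]) auto
  then show "(\<lambda>s. log_zeta_k_correction_term k s j) holomorphic_on {s. 1 / 2 < Re s}" for j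
    unfolding log_zeta_k_correction_term_def by (intro holomorphic_intros) auto
next
  fix K assume K: "compact K" "K \<subseteq> {s. 1 / 2 < Re s}"
  obtain a R where a: "1 / 2 < a" and bound: "\<And>s. s \<in> K \<Longrightarrow> a \<le> Re s \<and> norm s \<le> R"
    using compact_subset_halfplane_bounds[OF K] by blast
  let ?M = "\<lambda>j. 4 * R / a *
              (real (nth_prime (j * k)) powr - a - real (nth_prime (j * k + k)) powr - a)"
  have "summable ?M"
    using telescope_sums'[OF tendsto_powr_nth_prime_mult[of a k]] a assms
    by (intro summable_mult) (simp add: sums_summable algebra_simps)
  moreover have "norm (log_zeta_k_correction_term k s j) \<le> ?M j" if "s \<in> K" for j s
    using bound[OF that] a assms by (intro norm_log_zeta_k_correction_term_le) auto
  ultimately show "\<exists>M. summable M \<and> (\<forall>j. \<forall>s\<in>K. norm (log_zeta_k_correction_term k s j) \<le> M j)"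
    by blast
qed

lemma log_zeta_k_eq:
  assumes "0 < k" "1 < Re s"
  shows "log_zeta_k k s = log_zeta_k 1 s / of_nat k + log_zeta_k_correction k s"
proof -
  have log_zeta: "(\<lambda>n. log_euler_factor s (nth_prime n)) sums log_zeta_k 1 s"
    using log_zeta_k_sums[of 1 s] assms by simp
  have block: "(\<Sum>n\<in>{j * k..<j * k + k}. log_euler_factor s (nth_prime n)) =
                 (\<Sum>r<k. log_euler_factor s (nth_prime (j * k + r)))" for j
    using sum.shift_bounds_nat_ivl[of "\<lambda>n. log_euler_factor s (nth_prime n)" 0 "j * k" k]
    by (simp add: add.commute lessThan_atLeast0)
  have "(\<lambda>j. \<Sum>r<k. log_euler_factor s (nth_prime (j * k + r))) sums log_zeta_k 1 s"
    using sums_group[OF log_zeta \<open>0 < k\<close>] unfolding block .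
  then have "log_zeta_k_correction_term k s sums (log_zeta_k k s - log_zeta_k 1 s / of_nat k)"
    unfolding log_zeta_k_correction_term_def[abs_def]
    by (intro sums_diff sums_divide log_zeta_k_sums assms)
  then show ?thesis
    unfolding log_zeta_k_correction_def by (simp add: sums_iff)
qed

section \<open>Continuation of zeta to the right half-plane\<close>

(* The n-th term is (n + 1) powr -s minus the integral of x powr -s over [n + 1, n + 2]. *)
definition zeta_continuation_term :: "complex \<Rightarrow> nat \<Rightarrow> complex" where
  "zeta_continuation_term s n = of_nat (Suc n) powr - s -
     (of_nat (Suc (Suc n)) powr (1 - s) - of_nat (Suc n) powr (1 - s)) / (1 - s)"

definition zeta_continuation :: "complex \<Rightarrow> complex" where
  "zeta_continuation s = 1 / (s - 1) + (\<Sum>n. zeta_continuation_term s n)"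

lemma norm_zeta_continuation_term_le:
  assumes "s \<noteq> 1" "0 \<le> a" "a \<le> Re s" "norm s \<le> R"
  shows "norm (zeta_continuation_term s n) \<le> R / 2 * real (Suc n) powr (- a - 1)"
proof -
  define y where "y = real (Suc n)"
  define C where "C = norm s * y powr (- a - 1)"
  define h where "h x = of_real x powr (1 - s) / (1 - s) - of_real x * of_real y powr - s" for x
  have y: "1 \<le> y" by (simp add: y_def)
  \<comment> \<open>\<open>h (y + 1) - h y\<close> is minus the term, and \<open>h'\<close> vanishes at \<open>y\<close>.\<close>
  have "norm (h (y + 1) - h y) \<le> C * ((y + 1) - y)\<^sup>2 / 2 - C * (y - y)\<^sup>2 / 2"
  proof (rule norm_diff_le_of_dominated_derivative)
    fix x assume x: "x \<in> {y..y + 1}"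
    have "(h has_vector_derivative
             (1 - s) * of_real x powr (1 - s - 1) / (1 - s) - 1 * of_real y powr - s)
            (at x within {y..y + 1})"
      unfolding h_def using x y
      by (intro derivative_intros has_vector_derivative_of_real_powr)
         (auto intro: has_vector_derivative_of_real[OF DERIV_ident, simplified])
    then show "(h has_vector_derivative of_real x powr - s - of_real y powr - s)
                 (at x within {y..y + 1})"
      using assms(1) by simp
    show "((\<lambda>x. C * (x - y)\<^sup>2 / 2) has_real_derivative C * (x - y)) (at x within {y..y + 1})"
      by (auto intro!: derivative_eq_intros)
    show "norm (of_real x powr - s - of_real y powr - s :: complex) \<le> C * (x - y)"
      unfolding C_def using x y assms by (intro norm_of_real_powr_diff_le) auto
  qed simp
  moreover have "h (y + 1) - h y = (of_real (y + 1) powr (1 - s) - of_real y powr (1 - s)) / (1 - s)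
                                    - of_real y powr - s"
    by (simp add: h_def diff_divide_distrib algebra_simps)
  moreover have "zeta_continuation_term s n =
      - ((of_real (y + 1) powr (1 - s) - of_real y powr (1 - s)) / (1 - s) - of_real y powr - s)"
    unfolding zeta_continuation_term_def y_def by (simp add: add.commute)
  ultimately have "norm (zeta_continuation_term s n) \<le> C / 2"
    by (simp only: norm_minus_cancel) simp
  also have "C / 2 \<le> R / 2 * y powr (- a - 1)"
    unfolding C_def using assms by (simp add: mult_right_mono)
  finally show ?thesis by (simp add: y_def)
qed

lemma holomorphic_zeta_continuation:
  "zeta_continuation holomorphic_on {s. 0 < Re s} - {1}"
proof -
  have open_S: "open ({s. 0 < Re s} - {1})"
    by (intro open_Diff open_halfspace_Re_gt) auto
  have "(\<lambda>s. \<Sum>n. zeta_continuation_term s n) holomorphic_on {s. 0 < Re s} - {1}"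
  proof (rule holomorphic_on_suminf_compact_majorant[OF open_S])
    show "(\<lambda>s. zeta_continuation_term s n) holomorphic_on {s. 0 < Re s} - {1}" for n
      unfolding zeta_continuation_term_def by (intro holomorphic_intros) auto
  next
    fix K assume K: "compact K" "K \<subseteq> {s. 0 < Re s} - {1}"
    then obtain a R where a: "0 < a" and bound: "\<And>s. s \<in> K \<Longrightarrow> a \<le> Re s \<and> norm s \<le> R"
      using compact_subset_halfplane_bounds[of K 0] by blast
    have "norm (zeta_continuation_term s n) \<le> R / 2 * real (Suc n) powr (- a - 1)" if "s \<in> K" for n s
      using K(2) that bound[OF that] a by (intro norm_zeta_continuation_term_le) auto
    moreover have "summable (\<lambda>n. R / 2 * real (Suc n) powr (- a - 1))"
      using summable_Suc_powr[of "a + 1"] a by (intro summable_mult) simp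
    ultimately show "\<exists>M. summable M \<and> (\<forall>n. \<forall>s\<in>K. norm (zeta_continuation_term s n) \<le> M n)"
      by blast
  qed
  then show ?thesis
    unfolding zeta_continuation_def[abs_def] by (intro holomorphic_intros) auto
qed

lemma summable_zeta_continuation_term:
  assumes "s \<noteq> 1" "0 < Re s"
  shows "summable (zeta_continuation_term s)"
proof (rule summable_comparison_test'[OF summable_mult[OF summable_Suc_powr[of "Re s + 1"]]])
  show "norm (zeta_continuation_term s n) \<le> norm s / 2 * real (Suc n) powr - (Re s + 1)" for n
    using norm_zeta_continuation_term_le[OF assms(1), of "Re s" "norm s" n] assms by simp
qed (use assms in simp)

lemma zeta_continuation_eq_zeta_series:
  assumes "1 < Re s"
  shows "zeta_continuation s = zeta_series s"
proof -
  have "(\<lambda>n. real n powr (1 - Re s)) \<longlonglongrightarrow> 0"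
    by (rule tendsto_neg_powr[OF _ filterlim_real_sequentially]) (use assms in simp)
  from LIMSEQ_Suc[OF this]
  have "(\<lambda>n. norm (of_nat (Suc n) powr (1 - s) :: complex)) \<longlonglongrightarrow> 0"
    by (simp only: norm_of_nat_powr minus_complex.sel one_complex.sel)
  then have "(\<lambda>n. of_nat (Suc n) powr (1 - s) :: complex) \<longlonglongrightarrow> 0"
    by (rule tendsto_norm_zero_cancel)
  from telescope_sums[OF this]
  have "(\<lambda>n. of_nat (Suc (Suc n)) powr (1 - s) - of_nat (Suc n) powr (1 - s) :: complex) sums - 1"
    by (simp only: of_nat_1 One_nat_def[symmetric] powr_one_eq_one diff_0)
  from sums_diff[OF zeta_series_sums[OF assms] sums_divide[OF this, of "1 - s"]]
  have "zeta_continuation_term s sums (zeta_series s - - 1 / (1 - s))"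
    unfolding zeta_continuation_term_def[abs_def] .
  moreover have "1 / (s - 1) + (zeta_series s - - 1 / (1 - s)) = zeta_series s"
    using assms by (auto simp: divide_simps) (simp add: algebra_simps)
  ultimately show ?thesis
    unfolding zeta_continuation_def by (simp add: sums_iff)
qed

lemma Re_zeta_continuation_term_le:
  fixes b :: real
  assumes "0 < b" "b < 1"
  shows "Re (zeta_continuation_term b n) \<le> real (Suc n) powr - b - real (Suc (Suc n)) powr - b"
proof -
  have "- complex_of_real b = of_real (- b)" "1 - complex_of_real b = of_real (1 - b)"
    by simp_all
  then have term_eq: "zeta_continuation_term b n = of_real (real (Suc n) powr - b -
                        (real (Suc (Suc n)) powr (1 - b) - real (Suc n) powr (1 - b)) / (1 - b))"
    unfolding zeta_continuation_term_def by (simp only: of_nat_powr_of_real) simp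
  have "real (Suc n) + 1 = real (Suc (Suc n))" by simp
  then have "(1 - b) * real (Suc (Suc n)) powr - b
               \<le> real (Suc (Suc n)) powr (1 - b) - real (Suc n) powr (1 - b)"
    using powr_increment_ge[of "real (Suc n)" b] assms by simp
  then have "real (Suc (Suc n)) powr - b
               \<le> (real (Suc (Suc n)) powr (1 - b) - real (Suc n) powr (1 - b)) / (1 - b)"
    using assms by (subst pos_le_divide_eq) (auto simp: mult.commute)
  then show ?thesis
    unfolding term_eq Re_complex_of_real by linarith
qed

lemma Re_zeta_continuation_neg:
  fixes b :: real
  assumes "0 < b" "b < 1"
  shows "Re (zeta_continuation b) < 0"
proof -
  have "summable (zeta_continuation_term b)"
    using assms by (intro summable_zeta_continuation_term) auto
  from sums_Re[OF summable_sums[OF this]]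
  have Re_sums: "(\<lambda>n. Re (zeta_continuation_term b n)) sums Re (\<Sum>n. zeta_continuation_term b n)" .
  have "(\<lambda>n. real n powr - b) \<longlonglongrightarrow> 0"
    by (rule tendsto_neg_powr[OF _ filterlim_real_sequentially]) (use assms in simp)
  from telescope_sums'[OF LIMSEQ_Suc[OF this]]
  have "(\<lambda>n. real (Suc n) powr - b - real (Suc (Suc n)) powr - b) sums 1"
    by simp
  with Re_sums have "Re (\<Sum>n. zeta_continuation_term b n) \<le> 1"
    by (rule sums_le[OF Re_zeta_continuation_term_le[OF assms]])
  moreover have "1 / (complex_of_real b - 1) = of_real (1 / (b - 1))"
    by simp
  ultimately have "Re (zeta_continuation b) \<le> 1 / (b - 1) + 1"
    unfolding zeta_continuation_def by simp
  also have "\<dots> < 0"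
    using assms by (simp add: field_simps)
  finally show ?thesis .
qed

lemma Omega_half_eq: "Omega_half = {s. 1 / 2 < Re s} - {s. s \<in> \<real> \<and> Re s \<le> 1}"
  unfolding Omega_half_def by (auto simp: image_iff elim!: Reals_cases)

lemma open_Omega_half: "open Omega_half"
proof -
  have "{s. s \<in> \<real> \<and> Re s \<le> 1} = \<real> \<inter> {s. Re s \<le> 1}" by auto
  then show ?thesis
    unfolding Omega_half_eq
    by (metis closed_Int closed_complex_Reals closed_halfspace_Re_le open_Diff open_halfspace_Re_gt)
qed

lemma halfplane_subset_Omega_half: "{s. 1 < Re s} \<subseteq> Omega_half"
  unfolding Omega_half_eq by auto

lemma Omega_half_subset: "Omega_half \<subseteq> {s. 1 / 2 < Re s} - {1}"
  unfolding Omega_half_eq by auto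

lemma starlike_Omega_half: "starlike Omega_half"
  unfolding starlike_def
proof (intro bexI ballI subsetI)
  show "2 \<in> Omega_half" using halfplane_subset_Omega_half by auto
  fix x y assume x: "x \<in> Omega_half" and "y \<in> closed_segment 2 x"
  then obtain t where t: "0 \<le> t" "t \<le> 1" and y: "y = (1 - t) *\<^sub>R 2 + t *\<^sub>R x"
    by (auto simp: closed_segment_def)
  have Re_y: "Re y = (1 - t) * 2 + t * Re x" and Im_y: "Im y = t * Im x"
    using y by simp_all
  have x': "1 / 2 < Re x" "Im x = 0 \<Longrightarrow> 1 < Re x"
    using x unfolding Omega_half_eq by (auto simp: complex_is_Real_iff)
  have convex_bound: "c < Re y" if "c < Re x" "c < 2" for c
  proof (cases "t = 0")
    case True
    then show ?thesis using Re_y that by simp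
  next
    case False
    have "(1 - t) * c \<le> (1 - t) * 2" using t that by (intro mult_left_mono) auto
    moreover have "t * c < t * Re x" using t False that by (intro mult_strict_left_mono) auto
    ultimately show ?thesis using Re_y by (simp add: algebra_simps)
  qed
  have "1 / 2 < Re y" using convex_bound[of "1 / 2"] x'(1) by simp
  moreover have "1 < Re y" if "Im y = 0"
  proof (cases "t = 0")
    case True then show ?thesis using Re_y by simp
  next
    case False then show ?thesis using that Im_y x'(2) convex_bound by simp
  qed
  ultimately show "y \<in> Omega_half"
    unfolding Omega_half_eq by (auto simp: complex_is_Real_iff)
qed

lemma connected_Omega_half: "connected Omega_half"
  by (rule starlike_imp_connected[OF starlike_Omega_half])

lemma holomorphic_log_zeta_if_RH:
  assumes RH
  obtains L where "L holomorphic_on Omega_half" "\<And>s. 1 < Re s \<Longrightarrow> L s = log_zeta_k 1 s"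
proof -
  obtain f where f_holo: "f holomorphic_on {s. 1 / 2 < Re s} - {1}"
    and f_eq: "\<And>s. 1 < Re s \<Longrightarrow> f s = zeta_series s"
    and f_nonzero: "\<And>s. 1 / 2 < Re s \<Longrightarrow> s \<noteq> 1 \<Longrightarrow> f s \<noteq> 0"
    using \<open>RH\<close> unfolding RH_def zeta_series_def by auto
  obtain L where L_holo: "L holomorphic_on Omega_half"
    and L_exp: "\<And>s. s \<in> Omega_half \<Longrightarrow> f s = exp (L s)"
    using contractible_imp_holomorphic_log[OF holomorphic_on_subset[OF f_holo Omega_half_subset]
            starlike_imp_contractible[OF starlike_Omega_half]] f_nonzero Omega_half_subset
    by blast
  have "continuous_on {s. 1 < Re s} L"
    using holomorphic_on_subset[OF L_holo halfplane_subset_Omega_half]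
    by (rule holomorphic_on_imp_continuous_on)
  moreover have "continuous_on {s. 1 < Re s} (log_zeta_k 1)"
    by (rule holomorphic_on_imp_continuous_on[OF holomorphic_log_zeta_k]) simp
  moreover have "exp (L s) = exp (log_zeta_k 1 s)" if "s \<in> {s. 1 < Re s}" for s
    using that L_exp[of s] f_eq[of s] zeta_series_eq_exp_log_zeta[of s] halfplane_subset_Omega_half
    by auto
  ultimately obtain c where c: "\<And>s. 1 < Re s \<Longrightarrow> L s = log_zeta_k 1 s + c"
    using continuous_exp_eq_imp_diff_constant[OF convex_connected[OF convex_halfspace_Re_gt]]
    by (metis mem_Collect_eq)
  show ?thesis
    by (rule that[of "\<lambda>s. L s - c"]) (use L_holo c in \<open>auto intro!: holomorphic_intros\<close>)
qed

lemma has_analytic_cont_zeta_k_if_RH: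
  assumes RH and "0 < k"
  shows "has_analytic_cont (zeta_k k) Omega_half"
proof -
  obtain L where L_holo: "L holomorphic_on Omega_half"
    and L_eq: "\<And>s. 1 < Re s \<Longrightarrow> L s = log_zeta_k 1 s"
    using holomorphic_log_zeta_if_RH[OF \<open>RH\<close>] by blast
  define g where "g s = exp (L s / of_nat k + log_zeta_k_correction k s)" for s
  have "g holomorphic_on Omega_half"
    unfolding g_def using \<open>0 < k\<close> Omega_half_subset
    by (intro holomorphic_intros L_holo holomorphic_on_subset[OF holomorphic_log_zeta_k_correction])
       auto
  then have "g analytic_on Omega_half"
    by (simp add: analytic_on_open open_Omega_half)
  moreover have "g s = zeta_k k s" if "1 < Re s" for s
    using L_eq[OF that] log_zeta_k_eq[OF \<open>0 < k\<close> that] zeta_k_eq_exp_log_zeta_k[OF \<open>0 < k\<close> that]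
    by (simp add: g_def)
  ultimately show ?thesis
    unfolding has_analytic_cont_def by blast
qed

lemma zeta_continuation_eq_exp_log_zeta:
  "1 < Re s \<Longrightarrow> zeta_continuation s = exp (log_zeta_k 1 s)"
  by (simp add: zeta_continuation_eq_zeta_series zeta_series_eq_exp_log_zeta)

lemma analytic_zeta_continuation: "zeta_continuation analytic_on Omega_half"
proof -
  have "Omega_half \<subseteq> {s. 0 < Re s} - {1}"
    using Omega_half_subset by auto
  then show ?thesis
    using holomorphic_on_subset[OF holomorphic_zeta_continuation] open_Omega_half
    by (simp add: analytic_on_open)
qed

lemma analytic_log_zeta_k_correction:
  assumes "0 < k"
  shows "log_zeta_k_correction k analytic_on Omega_half"
  using holomorphic_on_subset[OF holomorphic_log_zeta_k_correction[OF assms]] Omega_half_subset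
        open_Omega_half
  by (auto simp: analytic_on_open)

lemma eventually_halfplane_at_2: "eventually (\<lambda>z. 1 < Re z) (at (2 :: complex))"
  using eventually_at_in_open'[OF open_halfspace_Re_gt[of 1], of 2] by simp

lemma frequently_zeta_continuation_nonzero:
  assumes "\<rho> \<in> Omega_half"
  shows "frequently (\<lambda>z. zeta_continuation z \<noteq> 0) (at \<rho>)"
proof (rule ccontr)
  assume "\<not> frequently (\<lambda>z. zeta_continuation z \<noteq> 0) (at \<rho>)"
  then have "frequently (\<lambda>z. zeta_continuation z = 0) (at \<rho>)"
    by (auto simp: not_frequently intro: eventually_frequently)
  then have "eventually (\<lambda>z. zeta_continuation z = 0) (at 2)"
    using halfplane_subset_Omega_half assms
    by (intro meromorphic_eventually_zero_propagates[OF
          analytic_on_imp_meromorphic_on[OF analytic_zeta_continuation]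
          open_Omega_half connected_Omega_half]) auto
  with eventually_halfplane_at_2 have "eventually (\<lambda>z. False) (at (2 :: complex))"
    by eventually_elim (simp add: zeta_continuation_eq_exp_log_zeta)
  then show False by simp
qed

lemma eventually_power_cont_zeta_k_eq:
  assumes "0 < k" and g: "g meromorphic_on Omega_half" "\<And>s. 1 < Re s \<Longrightarrow> g s = zeta_k k s"
    and "\<rho> \<in> Omega_half"
  shows "eventually (\<lambda>z. g z ^ k = zeta_continuation z * exp (of_nat k * log_zeta_k_correction k z))
           (at \<rho>)"
proof -
  define h where
    "h z = g z ^ k - zeta_continuation z * exp (of_nat k * log_zeta_k_correction k z)" for z
  have "h meromorphic_on Omega_half"
    unfolding h_def
    by (intro meromorphic_intros g(1) analytic_on_imp_meromorphic_on analytic_intros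
              analytic_zeta_continuation analytic_log_zeta_k_correction \<open>0 < k\<close>)
  moreover have "h s = 0" if "1 < Re s" for s
  proof -
    have "g s ^ k = exp (of_nat k * log_zeta_k k s)"
      using g(2)[OF that] zeta_k_eq_exp_log_zeta_k[OF \<open>0 < k\<close> that] by (simp add: exp_of_nat_mult)
    also have "of_nat k * log_zeta_k k s = log_zeta_k 1 s + of_nat k * log_zeta_k_correction k s"
      using log_zeta_k_eq[OF \<open>0 < k\<close> that] \<open>0 < k\<close> by (simp add: field_simps)
    finally show ?thesis
      using zeta_continuation_eq_exp_log_zeta[OF that] by (simp add: h_def exp_add)
  qed
  then have "frequently (\<lambda>z. h z = 0) (at 2)"
    using eventually_halfplane_at_2 by (intro eventually_frequently) (auto elim: eventually_mono)
  ultimately have "eventually (\<lambda>z. h z = 0) (at \<rho>)"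
    using halfplane_subset_Omega_half \<open>\<rho> \<in> Omega_half\<close>
    by (intro meromorphic_eventually_zero_propagates[OF _ open_Omega_half connected_Omega_half]) auto
  then show ?thesis by (simp add: h_def)
qed

lemma zeta_continuation_nonzero_if_has_meromorphic_cont:
  assumes "infinite S" "S \<subseteq> {1..}" "\<forall>k\<in>S. has_meromorphic_cont (zeta_k k) Omega_half"
    and \<rho>: "\<rho> \<in> Omega_half"
  shows "zeta_continuation \<rho> \<noteq> 0"
proof
  assume zero: "zeta_continuation \<rho> = 0"
  have analytic: "zeta_continuation analytic_on {\<rho>}"
    using analytic_on_subset[OF analytic_zeta_continuation] \<rho> by blast
  have pos: "0 < zorder zeta_continuation \<rho>"
    using zorder_pos_iff'[OF analytic frequently_zeta_continuation_nonzero[OF \<rho>]] zero by simp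
  obtain k where k: "k \<in> S" "nat (zorder zeta_continuation \<rho>) < k"
    using \<open>infinite S\<close> unfolding infinite_nat_iff_unbounded by blast
  with assms(2) have "0 < k" by auto
  obtain g where g: "g meromorphic_on Omega_half" "\<And>s. 1 < Re s \<Longrightarrow> g s = zeta_k k s"
    using assms(3) k(1) unfolding has_meromorphic_cont_def by blast
  have g_at: "g meromorphic_on {\<rho>}"
    using meromorphic_on_subset[OF g(1)] \<rho> by blast
  have "(\<lambda>z. exp (of_nat k * log_zeta_k_correction k z)) analytic_on {\<rho>}"
    using \<rho> analytic_log_zeta_k_correction[OF \<open>0 < k\<close>]
    by (intro analytic_intros) (auto intro: analytic_on_subset)
  then have "zorder zeta_continuation \<rho> = int k * zorder g \<rho>"
    by (rule zorder_eq_mult_zorder_of_power_eq[OF g_at analytic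
          frequently_zeta_continuation_nonzero[OF \<rho>] _ _ \<open>0 < k\<close>
          eventually_power_cont_zeta_k_eq[OF \<open>0 < k\<close> g \<rho>]])
       simp
  then have "int k dvd zorder zeta_continuation \<rho>" by simp
  then have "int k \<le> zorder zeta_continuation \<rho>"
    using pos by (rule zdvd_imp_le)
  with k(2) show False by linarith
qed

lemma RH_if_has_meromorphic_cont:
  assumes "infinite S" "S \<subseteq> {1..}" "\<forall>k\<in>S. has_meromorphic_cont (zeta_k k) Omega_half"
  shows RH
  unfolding RH_def
proof (intro exI[of _ zeta_continuation] conjI allI impI)
  show "zeta_continuation holomorphic_on {s. 1 / 2 < Re s} - {1}"
    by (rule holomorphic_on_subset[OF holomorphic_zeta_continuation]) auto
  show "zeta_continuation s = (\<Sum>n. 1 / of_nat (Suc n) powr s)" if "1 < Re s" for s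
    using zeta_continuation_eq_zeta_series[OF that] by (simp add: zeta_series_def)
  fix s assume s: "1 / 2 < Re s \<and> s \<noteq> 1"
  show "zeta_continuation s \<noteq> 0"
  proof (cases "s \<in> Omega_half")
    case True
    then show ?thesis by (rule zeta_continuation_nonzero_if_has_meromorphic_cont[OF assms])
  next
    case False
    with s obtain b where "s = of_real b" "0 < b" "b < 1"
      unfolding Omega_half_def by (auto simp: less_le)
    then show ?thesis using Re_zeta_continuation_neg by force
  qed
qed

lemma has_analytic_cont_imp_has_meromorphic_cont:
  "has_analytic_cont h A \<Longrightarrow> has_meromorphic_cont h A"
  unfolding has_analytic_cont_def has_meromorphic_cont_def
  using analytic_on_imp_meromorphic_on by blast

theorem mainTheorem1:
  shows "(RH \<longleftrightarrow> (\<forall>i\<ge>1. has_meromorphic_cont (zeta_k i) Omega_half))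
       \<and> (RH \<longleftrightarrow> (\<forall>i\<ge>1. has_analytic_cont (zeta_k i) Omega_half))
       \<and> (RH \<longleftrightarrow> (\<exists>S. S \<subseteq> {1..} \<and> infinite S \<and>
                      (\<forall>i\<in>S. has_analytic_cont (zeta_k i) Omega_half)))"
proof -
  have "has_analytic_cont (zeta_k i) Omega_half" if RH "1 \<le> i" for i
    using has_analytic_cont_zeta_k_if_RH that by simp
  moreover have "infinite {1::nat..}"
    by (rule infinite_Ici)
  ultimately show ?thesis
    using RH_if_has_meromorphic_cont has_analytic_cont_imp_has_meromorphic_cont
    by (metis atLeast_iff order_refl)
qed

end
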